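(* Let $(\mathcal X,\rho)$ be a metric space, $\{x_i^n:1\le i\le n,\ n\ge1\}\subset\mathcal X$, and $A_n=\{x_i^n:1\le i\le n\}$ (counted with indices). Assume $\hat R_n=\frac1n\sum_{i=1}^n\delta_{x_i^n}$ converges weakly to a probability measure $R$ whose support $\mathcal Y$ satisfies $R(\mathcal Y)=1$. Then there exist subsets $B_n\subset A_n$, and $C_n=A_n\setminus B_n$, such that: (1) $\mathrm{card}(B_n)/n\to1$; (2) $\frac1{\mathrm{card}(B_n)}\sum_{x_i^n\in B_n}\delta_{x_i^n}\to R$ weakly; (3) $\sup\{\rho(x,\mathcal Y):x\in B_n\}\to0$ as $n\to\infty$. In particular $\mathrm{card}(C_n)/n\to0$. *)

theory Defs
  imports "HOL-Probability.Probability"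
begin

definition bcont :: "('a::metric_space \<Rightarrow> real) \<Rightarrow> bool" where
  "bcont f \<longleftrightarrow> continuous_on UNIV f \<and> bounded (range f)"

text \<open>Integral of f against the normalised empirical measure
  (1/card I) * sum of Dirac masses at the points y i, i in I (counted with indices).\<close>
definition emp_int :: "(nat \<Rightarrow> 'a) \<Rightarrow> nat set \<Rightarrow> ('a \<Rightarrow> real) \<Rightarrow> real" where
  "emp_int y I f = (\<Sum>i\<in>I. f (y i)) / real (card I)"

definition emp_weak_conv :: "(nat \<Rightarrow> nat \<Rightarrow> 'a::metric_space) \<Rightarrow> (nat \<Rightarrow> nat set) \<Rightarrow> 'a measure \<Rightarrow> bool" where
  "emp_weak_conv y I R \<longleftrightarrow>
     (\<forall>f. bcont f \<longrightarrow> (\<lambda>n. emp_int (y n) (I n) f) \<longlonglongrightarrow> (\<integral>z. f z \<partial>R))"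

definition msupport :: "'a::metric_space measure \<Rightarrow> 'a set" where
  "msupport R = {y. \<forall>e>0. emeasure R (ball y e) > 0}"

end

theory Submission
  imports Defs
begin

text \<open>For every \<open>\<epsilon> > 0\<close> the fraction of sample points at distance at least \<open>\<epsilon>\<close> from the
  support \<open>Y\<close> tends to zero: it is bounded by the empirical mean of the bounded continuous function
  \<open>min 1 (infdist z Y / \<epsilon>)\<close>, whose \<open>R\<close>-integral vanishes because \<open>R\<close> is concentrated on \<open>Y\<close>.
  A diagonal choice of thresholds \<open>\<epsilon>\<^sub>n \<rightarrow> 0\<close> then removes all far points while the removed
  fraction still tends to zero, and discarding a vanishing fraction of the sample does not
  change the limits of empirical means of bounded functions.\<close>

lemma inverse_Suc_tendsto_zero:
  assumes "filterlim r at_top sequentially"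
  shows "(\<lambda>n. inverse (real (Suc (r n)))) \<longlonglongrightarrow> 0"
  using filterlim_compose[OF LIMSEQ_inverse_real_of_nat assms] by (simp add: o_def)

lemma diagonal_tendsto_zero:
  fixes a :: "nat \<Rightarrow> nat \<Rightarrow> real"
  assumes lim: "\<And>k. a k \<longlonglongrightarrow> 0"
  shows "\<exists>r. filterlim r at_top sequentially \<and> (\<lambda>n. a (r n) n) \<longlonglongrightarrow> 0"
proof -
  have "\<forall>k. \<exists>N. \<forall>n\<ge>N. \<bar>a k n\<bar> < inverse (real (Suc k))"
    using LIMSEQ_D[OF lim] by simp
  then obtain N where N: "\<And>k n. n \<ge> N k \<Longrightarrow> \<bar>a k n\<bar> < inverse (real (Suc k))"
    by metis
  define K where "K n = {k. k \<le> n \<and> N k \<le> n} \<union> {0}" for n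
  define r where "r n = Max (K n)" for n
  have fin: "finite (K n)" for n
    by (auto simp: K_def)
  have r_ge: "k \<le> r n" if "k \<le> n" "N k \<le> n" for k n
    unfolding r_def using fin that by (intro Max_ge) (auto simp: K_def)
  have r_in: "r n \<in> K n" for n
    unfolding r_def using fin by (intro Max_in) (auto simp: K_def)
  have r_lim: "filterlim r at_top sequentially"
    unfolding filterlim_at_top
  proof
    fix k
    show "\<forall>\<^sub>F n in sequentially. k \<le> r n"
      using eventually_ge_at_top[of "max k (N k)"] by eventually_elim (auto intro: r_ge)
  qed
  have "(\<lambda>n. a (r n) n) \<longlonglongrightarrow> 0"
  proof (rule Lim_null_comparison)
    show "(\<lambda>n. inverse (real (Suc (r n)))) \<longlonglongrightarrow> 0"
      using r_lim by (rule inverse_Suc_tendsto_zero)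
    show "\<forall>\<^sub>F n in sequentially. norm (a (r n) n) \<le> inverse (real (Suc (r n)))"
      using eventually_ge_at_top[of "N 0"]
    proof eventually_elim
      case (elim n)
      then have "N (r n) \<le> n"
        using r_in[of n] by (auto simp: K_def)
      then show ?case
        using N by fastforce
    qed
  qed
  with r_lim show ?thesis
    by blast
qed

lemma abs_emp_int_le:
  assumes "M \<ge> 0" and "\<And>i. i \<in> I \<Longrightarrow> \<bar>f (y i)\<bar> \<le> M"
  shows "\<bar>emp_int y I f\<bar> \<le> M"
proof (cases "I = {} \<or> infinite I")
  case False
  have "\<bar>\<Sum>i\<in>I. f (y i)\<bar> \<le> (\<Sum>i\<in>I. M)"
    using assms(2) by (intro order_trans[OF sum_abs] sum_mono)
  then show ?thesis
    using False by (simp add: emp_int_def pos_divide_le_eq card_gt_0_iff mult.commute)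
qed (use assms in \<open>auto simp: emp_int_def\<close>)

lemma card_mult_emp_int:
  assumes "finite I"
  shows "real (card I) * emp_int y I f = (\<Sum>i\<in>I. f (y i))"
  using assms by (cases "I = {}") (simp_all add: emp_int_def)

lemma emp_int_subset_diff:
  assumes "finite A" and "B \<subseteq> A"
  shows "real (card A) * (emp_int y B f - emp_int y A f)
           = real (card (A - B)) * (emp_int y B f - emp_int y (A - B) f)"
proof -
  have "finite B"
    using assms finite_subset by blast
  have card: "real (card A) = real (card B) + real (card (A - B))"
    using card_Diff_subset[OF \<open>finite B\<close> assms(2)] card_mono[OF assms] by (simp add: of_nat_diff)
  have sum: "(\<Sum>i\<in>A. f (y i)) = (\<Sum>i\<in>B. f (y i)) + (\<Sum>i\<in>A - B. f (y i))"
    using sum.subset_diff[OF assms(2,1)] by (simp add: add.commute)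
  show ?thesis
    using card_mult_emp_int[of A y f] card_mult_emp_int[of B y f] card_mult_emp_int[of "A - B" y f]
      \<open>finite B\<close> assms(1)
    by (simp add: card sum algebra_simps)
qed

lemma abs_emp_int_subset_diff_le:
  assumes "finite A" and "B \<subseteq> A" and "M \<ge> 0" and "\<And>i. i \<in> A \<Longrightarrow> \<bar>f (y i)\<bar> \<le> M"
  shows "\<bar>emp_int y B f - emp_int y A f\<bar> \<le> 2 * M * (real (card (A - B)) / real (card A))"
proof (cases "A = {}")
  case False
  then have pos: "real (card A) > 0"
    using assms(1) by (simp add: card_gt_0_iff)
  have "real (card A) * \<bar>emp_int y B f - emp_int y A f\<bar>
          = real (card (A - B)) * \<bar>emp_int y B f - emp_int y (A - B) f\<bar>"
    using emp_int_subset_diff[OF assms(1,2), of y f] by (metis abs_mult abs_of_nat)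
  also have "\<dots> \<le> real (card (A - B)) * (2 * M)"
  proof (rule mult_left_mono)
    have "\<bar>emp_int y B f\<bar> \<le> M" "\<bar>emp_int y (A - B) f\<bar> \<le> M"
      using assms by (auto intro!: abs_emp_int_le)
    then show "\<bar>emp_int y B f - emp_int y (A - B) f\<bar> \<le> 2 * M"
      by linarith
  qed simp
  finally show ?thesis
    using pos by (simp add: field_simps)
qed (use assms in simp)

lemma emp_weak_conv_subset:
  assumes conv: "emp_weak_conv y A R"
    and fin: "\<And>n. finite (A n)" and sub: "\<And>n. B n \<subseteq> A n"
    and removed: "(\<lambda>n. real (card (A n - B n)) / real (card (A n))) \<longlonglongrightarrow> 0"
  shows "emp_weak_conv y B R"
  unfolding emp_weak_conv_def
proof (intro allI impI)
  fix f :: "'a \<Rightarrow> real"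
  assume f: "bcont f"
  then obtain M where M: "\<And>z. \<bar>f z\<bar> \<le> M"
    unfolding bcont_def bounded_iff by auto
  then have "M \<ge> 0"
    using abs_ge_zero order_trans by blast
  have "(\<lambda>n. emp_int (y n) (B n) f - emp_int (y n) (A n) f) \<longlonglongrightarrow> 0"
  proof (rule Lim_null_comparison)
    show "\<forall>\<^sub>F n in sequentially. norm (emp_int (y n) (B n) f - emp_int (y n) (A n) f)
            \<le> 2 * M * (real (card (A n - B n)) / real (card (A n)))"
      unfolding real_norm_def
      by (intro always_eventually allI abs_emp_int_subset_diff_le[OF fin sub \<open>M \<ge> 0\<close>] M)
    show "(\<lambda>n. 2 * M * (real (card (A n - B n)) / real (card (A n)))) \<longlonglongrightarrow> 0"
      using tendsto_mult_right_zero[OF removed] by simp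
  qed
  moreover have "(\<lambda>n. emp_int (y n) (A n) f) \<longlonglongrightarrow> (\<integral>z. f z \<partial>R)"
    using conv f unfolding emp_weak_conv_def by blast
  ultimately show "(\<lambda>n. emp_int (y n) (B n) f) \<longlonglongrightarrow> (\<integral>z. f z \<partial>R)"
    using tendsto_add by fastforce
qed

lemma card_ratio_tendsto_one:
  assumes fin: "\<And>n. finite (A n)" and sub: "\<And>n. B n \<subseteq> A n"
    and nonempty: "\<forall>\<^sub>F n in sequentially. A n \<noteq> {}"
    and removed: "(\<lambda>n. real (card (A n - B n)) / real (card (A n))) \<longlonglongrightarrow> 0"
  shows "(\<lambda>n. real (card (B n)) / real (card (A n))) \<longlonglongrightarrow> 1"
proof (rule Lim_transform_eventually)
  show "(\<lambda>n. 1 - real (card (A n - B n)) / real (card (A n))) \<longlonglongrightarrow> 1"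
    using tendsto_diff[OF tendsto_const removed, of 1] by simp
  show "\<forall>\<^sub>F n in sequentially.
          1 - real (card (A n - B n)) / real (card (A n)) = real (card (B n)) / real (card (A n))"
    using nonempty
  proof eventually_elim
    case (elim n)
    have "card (B n) \<le> card (A n)" "card (A n - B n) = card (A n) - card (B n)"
      using card_mono[OF fin sub] card_Diff_subset[OF finite_subset[OF sub fin] sub] by auto
    moreover have "card (A n) > 0"
      using elim fin by (simp add: card_gt_0_iff)
    ultimately show ?case
      by (simp add: of_nat_diff field_simps)
  qed
qed

lemma card_filter_le_emp_int:
  assumes "finite I" and "\<And>i. i \<in> I \<Longrightarrow> g (y i) \<ge> 0" and "\<And>i. i \<in> I \<Longrightarrow> P i \<Longrightarrow> g (y i) \<ge> 1"
  shows "real (card {i\<in>I. P i}) / real (card I) \<le> emp_int y I g"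
proof -
  have "real (card {i\<in>I. P i}) = (\<Sum>i\<in>{i\<in>I. P i}. 1)"
    by simp
  also have "\<dots> \<le> (\<Sum>i\<in>{i\<in>I. P i}. g (y i))"
    using assms(3) by (intro sum_mono) auto
  also have "\<dots> \<le> (\<Sum>i\<in>I. g (y i))"
    using assms(1,2) by (intro sum_mono2) auto
  finally show ?thesis
    unfolding emp_int_def by (simp add: divide_right_mono)
qed

lemma bcont_min_infdist:
  "bcont (\<lambda>z. min 1 (infdist z Y / c))" if "c > 0"
  unfolding bcont_def bounded_iff
  using that by (auto intro!: continuous_intros exI[of _ 1] simp: infdist_nonneg)

lemma far_fraction_tendsto_zero:
  assumes "prob_space R" and "sets R = sets borel"
    and conv: "emp_weak_conv y A R" and fin: "\<And>n. finite (A n)"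
    and concentrated: "measure R Y = 1" and "\<epsilon> > 0"
  shows "(\<lambda>n. real (card {i\<in>A n. infdist (y n i) Y \<ge> \<epsilon>}) / real (card (A n))) \<longlonglongrightarrow> 0"
proof -
  define g where "g z = min 1 (infdist z Y / \<epsilon>)" for z
  have g: "bcont g"
    using bcont_min_infdist[of \<epsilon> Y] \<open>\<epsilon> > 0\<close> unfolding g_def by simp
  have "(\<integral>z. g z \<partial>R) = (\<integral>z. 0 \<partial>R)"
  proof (rule integral_cong_AE)
    show "g \<in> borel_measurable R"
      using g \<open>sets R = sets borel\<close> measurable_cong_sets borel_measurable_continuous_onI
      unfolding bcont_def by blast
    show "AE z in R. g z = 0"
      using prob_space.AE_prob_1[OF \<open>prob_space R\<close> concentrated] by (auto simp: g_def)
  qed simp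
  then have mean_g: "(\<lambda>n. emp_int (y n) (A n) g) \<longlonglongrightarrow> 0"
    using conv g unfolding emp_weak_conv_def by fastforce
  show ?thesis
  proof (rule tendsto_sandwich[OF _ _ tendsto_const mean_g])
    show "\<forall>\<^sub>F n in sequentially.
            real (card {i\<in>A n. infdist (y n i) Y \<ge> \<epsilon>}) / real (card (A n)) \<le> emp_int (y n) (A n) g"
      using \<open>\<epsilon> > 0\<close> by (intro always_eventually allI card_filter_le_emp_int fin)
         (auto simp: g_def infdist_nonneg)
  qed simp
qed

lemma SUP_ereal_tendsto_zero:
  fixes d :: "nat \<Rightarrow> nat \<Rightarrow> real"
  assumes "\<And>n i. i \<in> B n \<Longrightarrow> 0 \<le> d n i" and "\<And>n i. i \<in> B n \<Longrightarrow> d n i \<le> u n"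
    and "u \<longlonglongrightarrow> 0" and "\<forall>\<^sub>F n in sequentially. B n \<noteq> {}"
  shows "(\<lambda>n. SUP i\<in>B n. ereal (d n i)) \<longlonglongrightarrow> 0"
proof (rule tendsto_sandwich[of "\<lambda>_. 0" _ _ "\<lambda>n. ereal (u n)"])
  show "\<forall>\<^sub>F n in sequentially. 0 \<le> (SUP i\<in>B n. ereal (d n i))"
    using assms(4) by eventually_elim (use assms(1) in \<open>auto intro: SUP_upper2\<close>)
  show "\<forall>\<^sub>F n in sequentially. (SUP i\<in>B n. ereal (d n i)) \<le> ereal (u n)"
    by (intro always_eventually allI SUP_least) (simp add: assms(2))
  show "(\<lambda>n. ereal (u n)) \<longlonglongrightarrow> 0"
    using tendsto_ereal[OF assms(3)] by (simp add: zero_ereal_def)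
qed simp

theorem proposition3p1:
  fixes x :: "nat \<Rightarrow> nat \<Rightarrow> 'a::metric_space" and R :: "'a measure"
  assumes "prob_space R" and "sets R = sets borel"
    and "emp_weak_conv x (\<lambda>n. {1..n}) R"
    and "measure R (msupport R) = 1"
  shows "\<exists>B :: nat \<Rightarrow> nat set.
           (\<forall>n. B n \<subseteq> {1..n}) \<and>
           (\<lambda>n. real (card (B n)) / real n) \<longlonglongrightarrow> 1 \<and>
           emp_weak_conv x B R \<and>
           (\<lambda>n. SUP i\<in>B n. ereal (infdist (x n i) (msupport R))) \<longlonglongrightarrow> 0 \<and>
           (\<lambda>n. real (card ({1..n} - B n)) / real n) \<longlonglongrightarrow> 0"
proof -
  define Y where "Y = msupport R"
  define far where "far \<epsilon> n = {i\<in>{1..n}. infdist (x n i) Y \<ge> \<epsilon>}" for \<epsilon> n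
  have "(\<lambda>n. real (card (far (inverse (real (Suc k))) n)) / real n) \<longlonglongrightarrow> 0" for k
    using far_fraction_tendsto_zero[OF assms(1-3) _ assms(4)[folded Y_def]] by (simp add: far_def)
  then obtain r where r: "filterlim r at_top sequentially"
    and removed: "(\<lambda>n. real (card (far (inverse (real (Suc (r n)))) n)) / real n) \<longlonglongrightarrow> 0"
    using diagonal_tendsto_zero[of "\<lambda>k n. real (card (far (inverse (real (Suc k))) n)) / real n"]
    by blast
  define B where "B n = {1..n} - far (inverse (real (Suc (r n)))) n" for n
  have sub: "B n \<subseteq> {1..n}" for n
    by (auto simp: B_def)
  have "{1..n} - B n = far (inverse (real (Suc (r n)))) n" for n
    by (auto simp: B_def far_def)
  with removed have removed': "(\<lambda>n. real (card ({1..n} - B n)) / real n) \<longlonglongrightarrow> 0"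
    by presburger
  have kept: "(\<lambda>n. real (card (B n)) / real n) \<longlonglongrightarrow> 1"
    using card_ratio_tendsto_one[of "\<lambda>n. {1..n}" B] sub removed' eventually_gt_at_top[of 0] by simp
  have "\<forall>\<^sub>F n in sequentially. B n \<noteq> {}"
    using order_tendstoD(1)[OF kept zero_less_one] by eventually_elim auto
  moreover have "(\<lambda>n. inverse (real (Suc (r n)))) \<longlonglongrightarrow> 0"
    using r by (rule inverse_Suc_tendsto_zero)
  ultimately have "(\<lambda>n. SUP i\<in>B n. ereal (infdist (x n i) Y)) \<longlonglongrightarrow> 0"
    by (intro SUP_ereal_tendsto_zero) (auto simp: B_def far_def infdist_nonneg)
  moreover have "emp_weak_conv x B R"
    using emp_weak_conv_subset[of x "\<lambda>n. {1..n}" R B] assms(3) sub removed' by simp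
  ultimately show ?thesis
    using sub kept removed' unfolding Y_def by blast
qed

end
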